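(* Let $\mathcal{D}$ be a finite set with a metric $d$, let $\phi:\mathcal{D}\to\mathbb{R}^{d'}$, and let $M>0$, $m>0$. Suppose that $\ell_T(x_a,x_p,x_n;\phi,m)=0$ for all $x_a\in\mathcal{D}$, $x_p\in B_M(x_a)$, $x_n\in\bar B_M(x_a)$. Then for all $x_i,x_r\in\mathcal{D}$ with $\|\phi(x_i)-\phi(x_r)\|<m$ we have $d(x_i,x_r)<M$.
   Context: $\|\cdot\|$ is the Euclidean norm. $B_M(x)=\{x'\in\mathcal{D}: d(x,x')<M\}$ and $\bar B_M(x)=\mathcal{D}\setminus B_M(x)$. The per-example triplet loss is $\ell_T(x_a,x_p,x_n;\phi,m)=\max(0,\,m+\|\phi(x_a)-\phi(x_p)\|-\|\phi(x_a)-\phi(x_n)\|)$. *)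

theory Defs
  imports "HOL-Analysis.Analysis"
begin

definition metric_on :: "'a set \<Rightarrow> ('a \<Rightarrow> 'a \<Rightarrow> real) \<Rightarrow> bool" where
  "metric_on D d \<longleftrightarrow>
     (\<forall>x\<in>D. \<forall>y\<in>D. 0 \<le> d x y) \<and>
     (\<forall>x\<in>D. \<forall>y\<in>D. d x y = 0 \<longleftrightarrow> x = y) \<and>
     (\<forall>x\<in>D. \<forall>y\<in>D. d x y = d y x) \<and>
     (\<forall>x\<in>D. \<forall>y\<in>D. \<forall>z\<in>D. d x z \<le> d x y + d y z)"

definition ball_D :: "'a set \<Rightarrow> ('a \<Rightarrow> 'a \<Rightarrow> real) \<Rightarrow> real \<Rightarrow> 'a \<Rightarrow> 'a set" where
  "ball_D D d M x = {x' \<in> D. d x x' < M}"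

definition coball_D :: "'a set \<Rightarrow> ('a \<Rightarrow> 'a \<Rightarrow> real) \<Rightarrow> real \<Rightarrow> 'a \<Rightarrow> 'a set" where
  "coball_D D d M x = D - ball_D D d M x"

definition triplet_loss :: "('a \<Rightarrow> real ^ 'n) \<Rightarrow> real \<Rightarrow> 'a \<Rightarrow> 'a \<Rightarrow> 'a \<Rightarrow> real" where
  "triplet_loss \<phi> m xa xp xn =
     max 0 (m + norm (\<phi> xa - \<phi> xp) - norm (\<phi> xa - \<phi> xn))"

end

theory Submission
  imports Defs
begin

lemma triplet_loss_eq_0_iff:
  "triplet_loss \<phi> m xa xp xn = 0 \<longleftrightarrow> m + norm (\<phi> xa - \<phi> xp) \<le> norm (\<phi> xa - \<phi> xn)"
  unfolding triplet_loss_def by (simp add: max_def)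

lemma metric_on_self_eq_0:
  assumes "metric_on D d" and "x \<in> D"
  shows "d x x = 0"
  using assms unfolding metric_on_def by blast

lemma centre_in_ball_D:
  assumes "metric_on D d" and "x \<in> D" and "M > 0"
  shows "x \<in> ball_D D d M x"
  using assms metric_on_self_eq_0 unfolding ball_D_def by fastforce

lemma mem_coball_D_iff:
  "y \<in> coball_D D d M x \<longleftrightarrow> y \<in> D \<and> \<not> d x y < M"
  unfolding coball_D_def ball_D_def by auto

theorem lemma1:
  fixes D :: "'a set" and d :: "'a \<Rightarrow> 'a \<Rightarrow> real"
    and \<phi> :: "'a \<Rightarrow> real ^ 'n" and M m :: real
  assumes "finite D" and "metric_on D d" and "M > 0" and "m > 0"
    and "\<forall>xa\<in>D. \<forall>xp\<in>ball_D D d M xa. \<forall>xn\<in>coball_D D d M xa.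
           triplet_loss \<phi> m xa xp xn = 0"
  shows "\<forall>xi\<in>D. \<forall>xr\<in>D. norm (\<phi> xi - \<phi> xr) < m \<longrightarrow> d xi xr < M"
proof (intro ballI impI)
  fix xi xr
  assume xi: "xi \<in> D" and xr: "xr \<in> D" and close: "norm (\<phi> xi - \<phi> xr) < m"
  show "d xi xr < M"
  proof (rule ccontr)
    assume "\<not> d xi xr < M"
    then have "xr \<in> coball_D D d M xi"
      using xr by (simp add: mem_coball_D_iff)
    \<comment> \<open>The anchor serves as its own positive, so a zero loss forces a margin of m.\<close>
    moreover have "xi \<in> ball_D D d M xi"
      using assms(2) xi assms(3) by (rule centre_in_ball_D)
    ultimately have "m \<le> norm (\<phi> xi - \<phi> xr)"
      using assms(5) xi by (fastforce simp: triplet_loss_eq_0_iff)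
    with close show False
      by simp
  qed
qed

end
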